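(* Let $X$ be a finite $T_0$-space. If $\mathrm{tr}(X_M^2)=0$, then $X$ is a totally ordered set.
   Context: A finite $T_0$-space is identified with a finite poset via $x\le y$ iff $U_x\subseteq U_y$, where $U_x$ is the minimal open set containing $x$. For a labelling $X=\{x_1,\dots,x_n\}$, $X_M=(x_{i,j})$ is the $n\times n$ matrix with $x_{i,j}=0$ if $x_i\le x_j$ and $x_{i,j}=1$ otherwise. *)

theory Defs
  imports "HOL-Analysis.Analysis"
begin

definition minimal_open :: "'a topology \<Rightarrow> 'a \<Rightarrow> 'a set" where
  "minimal_open X x = \<Inter> {U. openin X U \<and> x \<in> U}"

definition space_le :: "'a topology \<Rightarrow> 'a \<Rightarrow> 'a \<Rightarrow> bool" where
  "space_le X x y \<longleftrightarrow> minimal_open X x \<subseteq> minimal_open X y"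

text \<open>The matrix X_M for a labelling lab of the points by indices 0..n-1:
  entry (i,j) is 0 if x_i \<le> x_j and 1 otherwise.\<close>
definition space_matrix :: "'a topology \<Rightarrow> (nat \<Rightarrow> 'a) \<Rightarrow> nat \<Rightarrow> nat \<Rightarrow> int" where
  "space_matrix X lab i j = (if space_le X (lab i) (lab j) then 0 else 1)"

definition trace_sq :: "nat \<Rightarrow> (nat \<Rightarrow> nat \<Rightarrow> int) \<Rightarrow> int" where
  "trace_sq n M = (\<Sum>i<n. \<Sum>k<n. M i k * M k i)"

end

theory Submission
  imports Defs
begin

text \<open>The diagonal entries of \<open>X\<^sub>M\<^sup>2\<close> count the points incomparable with a given point, so a
  vanishing trace leaves no incomparable pair.\<close>

lemma trace_sq_eq_0_iff:
  fixes M :: "nat \<Rightarrow> nat \<Rightarrow> int"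
  assumes "\<And>i k. 0 \<le> M i k"
  shows "trace_sq n M = 0 \<longleftrightarrow> (\<forall>i<n. \<forall>k<n. M i k * M k i = 0)"
proof -
  have products_nonneg: "0 \<le> M i k * M k i" for i k
    using assms by simp
  have "trace_sq n M = 0 \<longleftrightarrow> (\<forall>i<n. (\<Sum>k<n. M i k * M k i) = 0)"
    unfolding trace_sq_def
    by (subst sum_nonneg_eq_0_iff) (auto intro: sum_nonneg products_nonneg)
  also have "\<dots> \<longleftrightarrow> (\<forall>i<n. \<forall>k<n. M i k * M k i = 0)"
    by (subst sum_nonneg_eq_0_iff) (auto intro: products_nonneg)
  finally show ?thesis .
qed

lemma space_matrix_nonneg: "0 \<le> space_matrix X lab i j"
  by (simp add: space_matrix_def)

lemma space_matrix_mult_eq_0_iff: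
  "space_matrix X lab i k * space_matrix X lab k i = 0 \<longleftrightarrow>
     space_le X (lab i) (lab k) \<or> space_le X (lab k) (lab i)"
  by (simp add: space_matrix_def)

theorem mainTheorem12:
  fixes X :: "'a topology" and lab :: "nat \<Rightarrow> 'a" and n :: nat
  assumes "finite (topspace X)"
    and "t0_space X"
    and "bij_betw lab {..<n} (topspace X)"
    and "trace_sq n (space_matrix X lab) = 0"
  shows "\<forall>x\<in>topspace X. \<forall>y\<in>topspace X. space_le X x y \<or> space_le X y x"
proof (intro ballI)
  fix x y assume "x \<in> topspace X" "y \<in> topspace X"
  with assms(3) obtain i k where "i < n" "k < n" "x = lab i" "y = lab k"
    by (metis bij_betw_imp_surj_on imageE lessThan_iff)
  moreover have "\<forall>i<n. \<forall>k<n. space_matrix X lab i k * space_matrix X lab k i = 0"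
    using assms(4) by (simp add: trace_sq_eq_0_iff space_matrix_nonneg)
  ultimately show "space_le X x y \<or> space_le X y x"
    using space_matrix_mult_eq_0_iff by blast
qed

end
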